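(* Let $k\ge1$ and let $S_1,\dots,S_k\in\mathcal{B}_A(\mathcal{H})$. Then for every positive integer $n$, $$\omega_A^{2n}\Big(\sum_{i=1}^kS_i\Big)\le\frac{k^{2n-1}}{2}\Big\|\sum_{i=1}^k\Big(\big(S_i^{\sharp_A}S_i\big)^n+\big(S_iS_i^{\sharp_A}\big)^n\Big)\Big\|_A.$$
   Context: $\mathcal{H}$ is a complex Hilbert space with inner product $\langle\cdot,\cdot\rangle$, and $A$ is a fixed nonzero positive bounded operator on $\mathcal{H}$. Set $\langle x,y\rangle_A=\langle Ax,y\rangle$ and $\|x\|_A=\|A^{1/2}x\|$. $\mathcal{B}_A(\mathcal{H})$ is the set of bounded operators $T$ for which there exists a bounded $S$ with $\langle Tx,y\rangle_A=\langle x,Sy\rangle_A$ for all $x,y$ (equivalently $\mathcal{R}(T^*A)\subseteq\mathcal{R}(A)$). For $T\in\mathcal{B}_A(\mathcal{H})$, $T^{\sharp_A}=A^\dagger T^*A$ ($A^\dagger$ the Moore–Penrose inverse) is the reduced solution of $AX=T^*A$. For an operator $T$ with $\|Tx\|_A\le\lambda\|x\|_A$ for some $\lambda>0$ and all $x$, $\|T\|_A=\sup\{\|Tx\|_A: \|x\|_A=1\}$, and $\omega_A(T)=\sup\{|\langle Tx,x\rangle_A|:\|x\|_A=1\}$. *)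

theory Defs
  imports "HOL-Analysis.Analysis"
begin

class complex_vector = real_vector +
  fixes scaleC :: "complex \<Rightarrow> 'a \<Rightarrow> 'a"
  assumes scaleC_add_right: "scaleC a (x + y) = scaleC a x + scaleC a y"
    and scaleC_add_left: "scaleC (a + b) x = scaleC a x + scaleC b x"
    and scaleC_scaleC: "scaleC a (scaleC b x) = scaleC (a * b) x"
    and scaleC_one: "scaleC 1 x = x"
    and scaleR_scaleC: "scaleR r x = scaleC (complex_of_real r) x"

class complex_inner = complex_vector + real_normed_vector +
  fixes cinner :: "'a \<Rightarrow> 'a \<Rightarrow> complex"
  assumes cinner_commute: "cinner x y = cnj (cinner y x)"
    and cinner_add_left: "cinner (x + y) z = cinner x z + cinner y z"
    and cinner_scaleC_left: "cinner (scaleC c x) y = c * cinner x y"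
    and cinner_ge_zero: "0 \<le> Re (cinner x x)"
    and cinner_eq_zero_iff: "cinner x x = 0 \<longleftrightarrow> x = 0"
    and norm_eq_sqrt_cinner: "norm x = sqrt (Re (cinner x x))"

class chilbert_space = complex_inner + complete_space

definition bounded_op :: "('a::complex_inner \<Rightarrow> 'a) \<Rightarrow> bool" where
  "bounded_op T \<longleftrightarrow> (\<forall>x y. T (x + y) = T x + T y) \<and> (\<forall>c x. T (scaleC c x) = scaleC c (T x))
     \<and> (\<exists>K. \<forall>x. norm (T x) \<le> K * norm x)"

definition cadj :: "('a::complex_inner \<Rightarrow> 'a) \<Rightarrow> ('a \<Rightarrow> 'a)" where
  "cadj T = (THE S. \<forall>x y. cinner (T x) y = cinner x (S y))"

definition positive_op :: "('a::complex_inner \<Rightarrow> 'a) \<Rightarrow> bool" where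
  "positive_op A \<longleftrightarrow> bounded_op A \<and> (\<forall>x. Im (cinner (A x) x) = 0 \<and> 0 \<le> Re (cinner (A x) x))"

definition A_inner :: "('a::complex_inner \<Rightarrow> 'a) \<Rightarrow> 'a \<Rightarrow> 'a \<Rightarrow> complex" where
  "A_inner A x y = cinner (A x) y"

definition A_norm :: "('a::complex_inner \<Rightarrow> 'a) \<Rightarrow> 'a \<Rightarrow> real" where
  "A_norm A x = sqrt (Re (cinner (A x) x))"

definition in_BA :: "('a::complex_inner \<Rightarrow> 'a) \<Rightarrow> ('a \<Rightarrow> 'a) \<Rightarrow> bool" where
  "in_BA A T \<longleftrightarrow> bounded_op T \<and>
     (\<exists>S. bounded_op S \<and> (\<forall>x y. A_inner A (T x) y = A_inner A x (S y)))"

text \<open>T^{sharp_A} = A^dagger T^* A, the reduced solution of A X = T^* A, i.e. the unique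
  bounded solution whose range lies in the closure of the range of A.\<close>
definition sharpA :: "('a::complex_inner \<Rightarrow> 'a) \<Rightarrow> ('a \<Rightarrow> 'a) \<Rightarrow> ('a \<Rightarrow> 'a)" where
  "sharpA A T = (THE X. bounded_op X \<and> (\<forall>x. A (X x) = cadj T (A x)) \<and> range X \<subseteq> closure (range A))"

definition A_opnorm :: "('a::complex_inner \<Rightarrow> 'a) \<Rightarrow> ('a \<Rightarrow> 'a) \<Rightarrow> real" where
  "A_opnorm A T = Sup {A_norm A (T x) | x. A_norm A x = 1}"

definition A_numrad :: "('a::complex_inner \<Rightarrow> 'a) \<Rightarrow> ('a \<Rightarrow> 'a) \<Rightarrow> real" where
  "A_numrad A T = Sup {cmod (A_inner A (T x) x) | x. A_norm A x = 1}"

end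

theory Submission
  imports Defs
begin

(* For an A-unit vector x and T = S_1 + ... + S_k, the triangle inequality and convexity of
   t^(2n) give |<T x, x>_A|^(2n) <= k^(2n-1) * (sum of the |<S_i x, x>_A|^(2n)).
   For a single S with reduced solution S#, the Cauchy-Schwarz inequality for the semi-inner
   product <_, _>_A bounds |<S x, x>_A|^2 both by <S# S x, x>_A = ||S x||_A^2 and by
   <S S# x, x>_A = ||S# x||_A^2, hence by their mean. The operators P = S# S and P = S S# are
   A-selfadjoint and A-positive, so j |-> <P^j x, x>_A is log-convex, which yields the
   McCarthy-type inequality <P x, x>_A^n <= <P^n x, x>_A; with convexity of t^n this bounds
   |<S x, x>_A|^(2n) by half of <((S# S)^n + (S S#)^n) x, x>_A. Summing and taking suprema
   gives the theorem.

   That S# exists and is an A-adjoint of S needs the projection theorem and, because the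
   Hilbert-space adjoint enters its definition, the Riesz representation theorem. *)

lemma scaleC_zero_left [simp]: "scaleC 0 (x::'a::complex_vector) = 0"
  by (metis scaleR_scaleC scaleR_zero_left of_real_0)

lemma scaleC_zero_right [simp]: "scaleC c (0::'a::complex_vector) = 0"
  by (metis add_cancel_left_left add_0 scaleC_add_right)

lemma scaleC_minus_left: "scaleC (- c) (x::'a::complex_vector) = - scaleC c x"
  by (metis add.inverse_unique add.right_neutral right_minus scaleC_add_left scaleC_zero_left)

lemma scaleC_diff_right: "scaleC c (x - y) = scaleC c x - scaleC c (y::'a::complex_vector)"
  by (metis add_diff_cancel diff_add_cancel scaleC_add_right)

lemma cinner_add_right: "cinner x (y + z) = cinner x y + cinner x (z::'a::complex_inner)"
  by (metis cinner_add_left cinner_commute complex_cnj_add)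

lemma cinner_scaleC_right: "cinner x (scaleC c y) = cnj c * cinner x (y::'a::complex_inner)"
  by (metis cinner_commute cinner_scaleC_left complex_cnj_mult)

lemma cinner_zero_left [simp]: "cinner 0 (y::'a::complex_inner) = 0"
  by (metis scaleC_zero_left cinner_scaleC_left mult_zero_left)

lemma cinner_zero_right [simp]: "cinner y (0::'a::complex_inner) = 0"
  by (metis cinner_commute cinner_zero_left complex_cnj_zero)

lemma cinner_diff_left: "cinner (x - y) z = cinner x z - cinner y (z::'a::complex_inner)"
  by (metis add_diff_cancel_right' cinner_add_left diff_add_cancel)

lemma cinner_diff_right: "cinner z (x - y) = cinner z x - cinner z (y::'a::complex_inner)"
  by (metis add_diff_cancel_right' cinner_add_right diff_add_cancel)

lemma cinner_scaleR_left: "cinner (scaleR r x) y = complex_of_real r * cinner x (y::'a::complex_inner)"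
  by (simp add: scaleR_scaleC cinner_scaleC_left)

lemma cinner_scaleR_right: "cinner y (scaleR r x) = complex_of_real r * cinner y (x::'a::complex_inner)"
  by (simp add: scaleR_scaleC cinner_scaleC_right)

lemma cinner_sum_left: "cinner (\<Sum>i\<in>I. f i) (y::'a::complex_inner) = (\<Sum>i\<in>I. cinner (f i) y)"
  by (induct I rule: infinite_finite_induct) (auto simp: cinner_add_left)

lemma cinner_sum_right: "cinner y (\<Sum>i\<in>I. f i) = (\<Sum>i\<in>I. cinner y (f i::'a::complex_inner))"
  by (induct I rule: infinite_finite_induct) (auto simp: cinner_add_right)

lemma power2_norm_eq_cinner: "(norm x)\<^sup>2 = Re (cinner x (x::'a::complex_inner))"
  by (simp add: norm_eq_sqrt_cinner cinner_ge_zero)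

lemma cinner_ext: "(\<And>z. cinner z x = cinner z (y::'a::complex_inner)) \<Longrightarrow> x = y"
  by (metis cinner_diff_right cinner_eq_zero_iff eq_iff_diff_eq_0)

lemma norm_scaleC: "norm (scaleC c x) = cmod c * norm (x::'a::complex_inner)"
proof -
  have "Im (cinner x x) = 0"
    by (metis cinner_commute cnj.simps(2) neg_equal_zero)
  then have "cinner x x = complex_of_real (Re (cinner x x))"
    by (simp add: complex_eq_iff)
  moreover have "cinner (scaleC c x) (scaleC c x) = (c * cnj c) * cinner x x"
    by (simp add: cinner_scaleC_left cinner_scaleC_right mult.assoc mult.left_commute)
  ultimately have "Re (cinner (scaleC c x) (scaleC c x)) = (cmod c)\<^sup>2 * Re (cinner x x)"
    by (metis Re_complex_of_real complex_norm_square of_real_mult)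
  then show ?thesis
    by (simp add: norm_eq_sqrt_cinner real_sqrt_mult)
qed

definition hermitian_form :: "('a::complex_vector \<Rightarrow> 'a \<Rightarrow> complex) \<Rightarrow> bool" where
  "hermitian_form B \<longleftrightarrow> (\<forall>x y z. B (x + y) z = B x z + B y z) \<and> (\<forall>c x y. B (scaleC c x) y = c * B x y)
     \<and> (\<forall>x y. B x y = cnj (B y x)) \<and> (\<forall>x. 0 \<le> Re (B x x))"

context
  fixes B :: "'a::complex_vector \<Rightarrow> 'a \<Rightarrow> complex"
  assumes B: "hermitian_form B"
begin

lemma hermitian_form_add_left: "B (x + y) z = B x z + B y z"
  using B unfolding hermitian_form_def by blast

lemma hermitian_form_scaleC_left: "B (scaleC c x) y = c * B x y"
  using B unfolding hermitian_form_def by blast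

lemma hermitian_form_cnj: "B x y = cnj (B y x)"
  using B unfolding hermitian_form_def by blast

lemma hermitian_form_nonneg: "0 \<le> Re (B x x)"
  using B unfolding hermitian_form_def by blast

lemma hermitian_form_add_right: "B z (x + y) = B z x + B z y"
  by (metis hermitian_form_cnj hermitian_form_add_left complex_cnj_add)

lemma hermitian_form_scaleC_right: "B y (scaleC c x) = cnj c * B y x"
  by (metis hermitian_form_cnj hermitian_form_scaleC_left complex_cnj_mult complex_cnj_cnj)

lemma hermitian_form_Re_self: "B x x = complex_of_real (Re (B x x))"
  using hermitian_form_cnj[of x x] by (simp add: complex_eq_iff)

lemma hermitian_form_Re_shift:
  "Re (B (x + scaleC (- (complex_of_real t * B x y)) y) (x + scaleC (- (complex_of_real t * B x y)) y))
     = Re (B x x) - 2 * t * (cmod (B x y))\<^sup>2 + t\<^sup>2 * (cmod (B x y))\<^sup>2 * Re (B y y)"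
proof -
  define c where "c = B x y"
  define \<mu> where "\<mu> = - (complex_of_real t * c)"
  have cs: "c * cnj c = complex_of_real ((cmod c)\<^sup>2)"
    by (rule complex_norm_square[symmetric])
  have t1: "\<mu> * cnj c = - complex_of_real (t * (cmod c)\<^sup>2)"
    unfolding \<mu>_def by (simp only: mult_minus_left mult.assoc cs of_real_mult)
  have t2: "cnj \<mu> * c = - complex_of_real (t * (cmod c)\<^sup>2)"
    using t1 by (metis \<mu>_def complex_cnj_cnj complex_cnj_minus complex_cnj_mult complex_cnj_complex_of_real
        mult.commute mult.left_commute)
  have t3: "\<mu> * cnj \<mu> * B y y = complex_of_real (t\<^sup>2 * (cmod c)\<^sup>2 * Re (B y y))"
  proof -
    have "\<mu> * cnj \<mu> = complex_of_real (t\<^sup>2) * (c * cnj c)"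
      unfolding \<mu>_def by (simp add: power2_eq_square mult.commute mult.left_commute)
    then show ?thesis
      by (subst hermitian_form_Re_self, simp only: cs of_real_mult)
  qed
  have "B (x + scaleC \<mu> y) (x + scaleC \<mu> y) = B x x + \<mu> * cnj c + cnj \<mu> * c + \<mu> * cnj \<mu> * B y y"
    using hermitian_form_cnj[of y x]
    by (simp add: hermitian_form_add_left hermitian_form_add_right hermitian_form_scaleC_left
        hermitian_form_scaleC_right c_def algebra_simps)
  then show ?thesis
    unfolding t1 t2 t3 by (simp add: \<mu>_def c_def)
qed

end

lemma quadratic_nonneg_imp_le:
  fixes a b s :: real
  assumes "\<And>t. 0 \<le> a - 2 * t * s + t\<^sup>2 * s * b" "0 \<le> s" "0 \<le> b"
  shows "s \<le> a * b"
proof (cases "b = 0")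
  case True
  show ?thesis
  proof (rule ccontr)
    assume "\<not> s \<le> a * b"
    then have "s > 0"
      using True by simp
    have "0 \<le> a - 2 * ((a + 1) / (2 * s)) * s"
      using assms(1)[of "(a + 1) / (2 * s)"] True by simp
    also have "\<dots> = -1"
      using \<open>s > 0\<close> by (simp add: field_simps)
    finally show False
      by simp
  qed
next
  case False
  then have "b > 0"
    using assms(3) by simp
  have "0 \<le> a - 2 * (1/b) * s + (1/b)\<^sup>2 * s * b"
    using assms(1) .
  also have "\<dots> = (a * b - s) / b"
    using \<open>b > 0\<close> by (simp add: field_simps power2_eq_square)
  finally show ?thesis
    using \<open>b > 0\<close> by (simp add: zero_le_divide_iff)
qed

lemma hermitian_form_Cauchy_Schwarz:
  assumes "hermitian_form B"
  shows "(cmod (B x y))\<^sup>2 \<le> Re (B x x) * Re (B y y)"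
proof (rule quadratic_nonneg_imp_le)
  show "0 \<le> Re (B x x) - 2 * t * (cmod (B x y))\<^sup>2 + t\<^sup>2 * (cmod (B x y))\<^sup>2 * Re (B y y)" for t
    using hermitian_form_Re_shift[OF assms] hermitian_form_nonneg[OF assms] by metis
qed (simp_all add: hermitian_form_nonneg[OF assms])

lemma hermitian_form_Cauchy_Schwarz_sqrt:
  assumes "hermitian_form B"
  shows "cmod (B x y) \<le> sqrt (Re (B x x)) * sqrt (Re (B y y))"
  using hermitian_form_Cauchy_Schwarz[OF assms] by (simp add: real_le_rsqrt flip: real_sqrt_mult)

lemma hermitian_form_cinner: "hermitian_form (cinner :: 'a::complex_inner \<Rightarrow> 'a \<Rightarrow> complex)"
  unfolding hermitian_form_def
  by (auto simp: cinner_add_left cinner_scaleC_left cinner_ge_zero intro: cinner_commute)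

lemma cinner_Cauchy_Schwarz: "cmod (cinner x y) \<le> norm x * norm (y::'a::complex_inner)"
  using hermitian_form_Cauchy_Schwarz_sqrt[OF hermitian_form_cinner, of x y]
  by (simp add: norm_eq_sqrt_cinner)

lemma bounded_linear_scaleC: "bounded_linear (scaleC c :: 'a::complex_inner \<Rightarrow> 'a)"
  by (rule bounded_linear_intro[of _ "cmod c"])
    (simp_all add: scaleC_add_right scaleR_scaleC scaleC_scaleC mult.commute norm_scaleC)

lemma bounded_linear_cinner_left: "bounded_linear (\<lambda>x. cinner x (y::'a::complex_inner))"
  by (rule bounded_linear_intro[of _ "norm y"])
    (simp_all add: cinner_add_left cinner_scaleR_left scaleR_conv_of_real cinner_Cauchy_Schwarz)

lemma bounded_op_add: "bounded_op T \<Longrightarrow> T (x + y) = T x + T y"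
  unfolding bounded_op_def by blast

lemma bounded_op_scaleC: "bounded_op T \<Longrightarrow> T (scaleC c x) = scaleC c (T x)"
  unfolding bounded_op_def by blast

lemma bounded_op_scaleR: "bounded_op T \<Longrightarrow> T (scaleR r x) = scaleR r (T x)"
  by (simp add: scaleR_scaleC bounded_op_scaleC)

lemma bounded_op_pos_bounded: "bounded_op T \<Longrightarrow> \<exists>K>0. \<forall>x. norm (T x) \<le> K * norm x"
proof -
  assume "bounded_op T"
  then obtain K where K: "\<And>x. norm (T x) \<le> K * norm x"
    unfolding bounded_op_def by blast
  have "norm (T x) \<le> max K 1 * norm x" for x
    using K[of x] mult_right_mono[of K "max K 1" "norm x"] by simp
  then show ?thesis
    by (intro exI[of _ "max K 1"]) auto
qed

lemma bounded_op_imp_bounded_linear: "bounded_op T \<Longrightarrow> bounded_linear T"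
proof -
  assume T: "bounded_op T"
  then obtain K where K: "\<And>x. norm (T x) \<le> K * norm x"
    unfolding bounded_op_def by blast
  show ?thesis
    by (rule bounded_linear_intro[of _ K]) (use T K in \<open>auto simp: bounded_op_add bounded_op_scaleR mult.commute\<close>)
qed

lemma bounded_op_zero [simp]: "bounded_op T \<Longrightarrow> T 0 = 0"
  using bounded_op_imp_bounded_linear linear_0 bounded_linear.linear by blast

lemma bounded_op_diff: "bounded_op T \<Longrightarrow> T (x - y) = T x - T y"
  using bounded_op_imp_bounded_linear linear_diff bounded_linear.linear by blast

lemma bounded_op_sum: "bounded_op T \<Longrightarrow> T (\<Sum>i\<in>I. f i) = (\<Sum>i\<in>I. T (f i))"
  by (induct I rule: infinite_finite_induct) (auto simp: bounded_op_add)

lemma bounded_op_id: "bounded_op (\<lambda>x. x)"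
  unfolding bounded_op_def by (auto intro: exI[of _ 1])

lemma bounded_op_comp:
  assumes S: "bounded_op S" and T: "bounded_op T"
  shows "bounded_op (S \<circ> T)"
proof -
  obtain K1 where "K1 > 0" and K1: "\<And>x. norm (S x) \<le> K1 * norm x"
    using bounded_op_pos_bounded[OF S] by blast
  obtain K2 where K2: "\<And>x. norm (T x) \<le> K2 * norm x"
    using bounded_op_pos_bounded[OF T] by blast
  have "norm (S (T x)) \<le> (K1 * K2) * norm x" for x
    using order_trans[OF K1[of "T x"] mult_left_mono[OF K2[of x]]] \<open>K1 > 0\<close> by (simp add: mult.assoc)
  then show ?thesis
    unfolding bounded_op_def using S T by (auto simp: bounded_op_add bounded_op_scaleC)
qed

lemma bounded_op_funpow: "bounded_op T \<Longrightarrow> bounded_op (T ^^ n)"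
  by (induct n) (simp_all add: bounded_op_id id_def bounded_op_comp)

lemma bounded_op_plus:
  assumes S: "bounded_op S" and T: "bounded_op T"
  shows "bounded_op (\<lambda>x. S x + T x)"
proof -
  obtain K1 where K1: "\<And>x. norm (S x) \<le> K1 * norm x"
    using bounded_op_pos_bounded[OF S] by blast
  obtain K2 where K2: "\<And>x. norm (T x) \<le> K2 * norm x"
    using bounded_op_pos_bounded[OF T] by blast
  have "norm (S x + T x) \<le> (K1 + K2) * norm x" for x
    using norm_triangle_ineq[of "S x" "T x"] K1[of x] K2[of x] by (simp add: distrib_right)
  then show ?thesis
    unfolding bounded_op_def using S T by (auto simp: bounded_op_add bounded_op_scaleC scaleC_add_right)
qed

lemma bounded_op_sum_fun:
  fixes F :: "'i \<Rightarrow> 'a::complex_inner \<Rightarrow> 'a"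
  shows "(\<And>i. i \<in> I \<Longrightarrow> bounded_op (F i)) \<Longrightarrow> bounded_op (\<lambda>x. \<Sum>i\<in>I. F i x)"
proof (induct I rule: infinite_finite_induct)
  case (insert i I)
  then show ?case
    using bounded_op_plus[of "F i" "\<lambda>x. \<Sum>i\<in>I. F i x"] by simp
qed (auto simp: bounded_op_def intro: exI[of _ 0])

lemma bounded_op_selfadjoint_if_real:
  assumes B: "bounded_op B" and real: "\<And>x. Im (cinner (B x) x) = 0"
  shows "cinner (B x) y = cinner x (B y)"
proof -
  define a where "a = cinner (B x) y"
  define b where "b = cinner (B y) x"
  have "cinner (B (x + y)) (x + y) = cinner (B x) x + a + b + cinner (B y) y"
    unfolding a_def b_def by (simp add: bounded_op_add[OF B] cinner_add_left cinner_add_right)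
  then have "Im (a + b) = 0"
    using real[of "x + y"] real[of x] real[of y] by simp
  have "cinner (B (x + scaleC \<i> y)) (x + scaleC \<i> y) = cinner (B x) x - \<i> * a + \<i> * b + cinner (B y) y"
    unfolding a_def b_def
    by (simp add: bounded_op_add[OF B] bounded_op_scaleC[OF B] cinner_add_left cinner_add_right
        cinner_scaleC_left cinner_scaleC_right algebra_simps)
  then have "Im (- \<i> * a + \<i> * b) = 0"
    using real[of "x + scaleC \<i> y"] real[of x] real[of y] by simp
  with \<open>Im (a + b) = 0\<close> have "a = cnj b"
    by (simp add: complex_eq_iff)
  then show ?thesis
    unfolding a_def b_def by (metis cinner_commute)
qed

lemma positive_op_bounded: "positive_op A \<Longrightarrow> bounded_op A"
  unfolding positive_op_def by blast

lemma positive_op_nonneg: "positive_op A \<Longrightarrow> 0 \<le> Re (cinner (A x) x)"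
  unfolding positive_op_def by blast

lemma positive_op_selfadjoint: "positive_op A \<Longrightarrow> cinner (A x) y = cinner x (A y)"
  by (rule bounded_op_selfadjoint_if_real) (auto simp: positive_op_def)

section \<open>Orthogonal projections onto closed subspaces\<close>

definition csubspace :: "'a::complex_vector set \<Rightarrow> bool" where
  "csubspace M \<longleftrightarrow> 0 \<in> M \<and> (\<forall>x\<in>M. \<forall>y\<in>M. x + y \<in> M) \<and> (\<forall>c. \<forall>x\<in>M. scaleC c x \<in> M)"

lemma csubspace_diff: "csubspace M \<Longrightarrow> x \<in> M \<Longrightarrow> y \<in> M \<Longrightarrow> x - y \<in> M"
  unfolding csubspace_def by (metis diff_conv_add_uminus scaleC_minus_left scaleC_one)

lemma csubspace_range: "bounded_op A \<Longrightarrow> csubspace (range A)"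
  unfolding csubspace_def
  by (auto simp flip: bounded_op_add bounded_op_scaleC intro: range_eqI[of _ _ 0])

lemma csubspace_closure:
  fixes M :: "'a::complex_inner set"
  assumes M: "csubspace M"
  shows "csubspace (closure M)"
proof -
  have add: "(\<lambda>x. a + x) ` closure M \<subseteq> closure M" if "a \<in> closure M" for a
  proof -
    have "(\<lambda>x. x + b) ` closure M \<subseteq> closure M" if "b \<in> M" for b
      using M that closure_subset
      by (intro image_closure_subset continuous_intros) (auto simp: csubspace_def)
    then have "(\<lambda>x. x + b) a \<in> closure M" if "b \<in> M" for b
      using \<open>a \<in> closure M\<close> that by blast
    then show ?thesis
      by (intro image_closure_subset continuous_intros) (auto simp: add.commute)
  qed
  have "scaleC c ` closure M \<subseteq> closure M" for c
  proof (rule image_closure_subset)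
    show "continuous_on (closure M) (scaleC c)"
      by (intro linear_continuous_on bounded_linear_scaleC)
    show "scaleC c ` M \<subseteq> closure M"
      using M closure_subset unfolding csubspace_def by blast
  qed simp
  then show ?thesis
    using M add closure_subset unfolding csubspace_def by blast
qed

lemma parallelogram_law:
  "(norm (x + y))\<^sup>2 + (norm (x - y))\<^sup>2 = 2 * (norm x)\<^sup>2 + 2 * (norm (y::'a::complex_inner))\<^sup>2"
  unfolding power2_norm_eq_cinner
  by (simp add: cinner_add_left cinner_add_right cinner_diff_left cinner_diff_right)

lemma norm_add_Pythagorean_cinner:
  assumes "cinner x (y::'a::complex_inner) = 0"
  shows "(norm (x + y))\<^sup>2 = (norm x)\<^sup>2 + (norm y)\<^sup>2"
proof -
  have "cinner y x = 0"
    using assms cinner_commute[of y x] by simp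
  with assms show ?thesis
    unfolding power2_norm_eq_cinner by (simp add: cinner_add_left cinner_add_right)
qed

lemma orthogonal_closure:
  assumes "\<And>m. m \<in> S \<Longrightarrow> cinner m (y::'a::complex_inner) = 0" "m \<in> closure S"
  shows "cinner m y = 0"
proof -
  have "closed {x. cinner x y = 0}"
    by (intro closed_Collect_eq linear_continuous_on[OF bounded_linear_cinner_left] continuous_on_const)
  then have "closure S \<subseteq> {x. cinner x y = 0}"
    using assms(1) by (intro closure_minimal) auto
  then show ?thesis
    using assms(2) by blast
qed

lemma near_points_close:
  fixes M :: "'a::complex_inner set"
  assumes M: "csubspace M" and "a \<in> M" "b \<in> M"
    and d: "\<And>m. m \<in> M \<Longrightarrow> d \<le> (norm (y - m))\<^sup>2"
  shows "(norm (a - b))\<^sup>2 \<le> 2 * ((norm (y - a))\<^sup>2 - d) + 2 * ((norm (y - b))\<^sup>2 - d)"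
proof -
  define mid where "mid = scaleR (1/2) (a + b)"
  have "mid \<in> M"
    unfolding mid_def scaleR_scaleC using M \<open>a \<in> M\<close> \<open>b \<in> M\<close> unfolding csubspace_def by blast
  have "(y - a) + (y - b) = scaleR 2 (y - mid)"
    unfolding mid_def by (simp add: scaleR_diff_right scaleR_2 algebra_simps)
  then have "(norm ((y - a) + (y - b)))\<^sup>2 = 4 * (norm (y - mid))\<^sup>2"
    by (simp add: power_mult_distrib)
  moreover have "norm ((y - a) - (y - b)) = norm (a - b)"
    by (simp add: norm_minus_commute)
  ultimately show ?thesis
    using parallelogram_law[of "y - a" "y - b"] d[OF \<open>mid \<in> M\<close>] by simp
qed

lemma minimizing_sequence_Cauchy:
  fixes M :: "'a::complex_inner set"
  assumes M: "csubspace M" and ms: "\<And>j. ms j \<in> M"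
    and d: "\<And>m. m \<in> M \<Longrightarrow> d \<le> (norm (y - m))\<^sup>2"
    and near: "\<And>j. (norm (y - ms j))\<^sup>2 < d + inverse (real (Suc j))"
  shows "Cauchy ms"
proof (rule metric_CauchyI)
  fix e :: real
  assume "0 < e"
  obtain N where N: "4 / e\<^sup>2 < real N"
    using reals_Archimedean2 by blast
  then have "0 < real N"
    using \<open>0 < e\<close> by (smt (verit) divide_pos_pos zero_less_power)
  have "norm (ms m - ms n) < e" if "N \<le> m" "N \<le> n" for m n
  proof -
    have "inverse (real (Suc m)) \<le> inverse (real N)" "inverse (real (Suc n)) \<le> inverse (real N)"
      using that \<open>0 < real N\<close> by (simp_all add: le_imp_inverse_le)
    then have "(norm (ms m - ms n))\<^sup>2 \<le> 4 * inverse (real N)"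
      using near_points_close[OF M ms ms d, of m n] near[of m] near[of n] by simp
    also have "\<dots> < e\<^sup>2"
      using N \<open>0 < real N\<close> \<open>0 < e\<close> by (simp add: field_simps)
    finally show ?thesis
      using \<open>0 < e\<close> by (simp add: power_less_imp_less_base)
  qed
  then show "\<exists>M. \<forall>m\<ge>M. \<forall>n\<ge>M. dist (ms m) (ms n) < e"
    by (auto simp: dist_norm)
qed

lemma closed_csubspace_nearest_point:
  fixes M :: "'a::chilbert_space set"
  assumes "closed M" and M: "csubspace M"
  shows "\<exists>p\<in>M. \<forall>m\<in>M. norm (y - p) \<le> norm (y - m)"
proof -
  define D where "D = {(norm (y - m))\<^sup>2 | m. m \<in> M}"
  define d where "d = Inf D"
  have "D \<noteq> {}"
    using M unfolding D_def csubspace_def by blast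
  have d: "d \<le> (norm (y - m))\<^sup>2" if "m \<in> M" for m
    unfolding d_def D_def by (rule cInf_lower) (use that in \<open>auto intro: bdd_belowI[of _ 0]\<close>)
  have "\<exists>m. m \<in> M \<and> (norm (y - m))\<^sup>2 < d + inverse (real (Suc j))" for j
    using cInf_lessD[OF \<open>D \<noteq> {}\<close>, of "d + inverse (real (Suc j))"] unfolding d_def D_def by auto
  then obtain ms where ms: "\<And>j. ms j \<in> M" and near: "\<And>j. (norm (y - ms j))\<^sup>2 < d + inverse (real (Suc j))"
    by metis
  obtain p where lim: "ms \<longlonglongrightarrow> p"
    using minimizing_sequence_Cauchy[OF M ms d near] Cauchy_convergent convergent_def by blast
  have "p \<in> M"
    using closed_sequentially[OF \<open>closed M\<close> _ lim] ms by blast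
  have "(\<lambda>j. (norm (y - ms j))\<^sup>2) \<longlonglongrightarrow> (norm (y - p))\<^sup>2"
    by (intro tendsto_intros lim)
  then have "(norm (y - p))\<^sup>2 \<le> d"
    using LIMSEQ_le[OF _ LIMSEQ_inverse_real_of_nat_add[of d]] near less_imp_le by blast
  then have "norm (y - p) \<le> norm (y - m)" if "m \<in> M" for m
    using d[OF that] by (simp add: power2_le_imp_le)
  with \<open>p \<in> M\<close> show ?thesis
    by blast
qed

text \<open>Otherwise moving p by a small real multiple of (cinner (y - p) m) m would bring it closer
  to y.\<close>

lemma nearest_point_orthogonal:
  fixes M :: "'a::complex_inner set"
  assumes M: "csubspace M" and "p \<in> M" and nearest: "\<And>m. m \<in> M \<Longrightarrow> norm (y - p) \<le> norm (y - m)"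
    and "m \<in> M"
  shows "cinner (y - p) m = 0"
proof -
  define c where "c = cinner (y - p) m"
  have "0 \<le> 0 - 2 * t * (cmod c)\<^sup>2 + t\<^sup>2 * (cmod c)\<^sup>2 * Re (cinner m m)" for t
  proof -
    have "p + scaleC (complex_of_real t * c) m \<in> M"
      using M \<open>p \<in> M\<close> \<open>m \<in> M\<close> unfolding csubspace_def by blast
    moreover have "y - (p + scaleC (complex_of_real t * c) m) = (y - p) + scaleC (- (complex_of_real t * c)) m"
      by (simp add: scaleC_minus_left)
    ultimately have "norm (y - p) \<le> norm ((y - p) + scaleC (- (complex_of_real t * c)) m)"
      using nearest by metis
    then have "(norm (y - p))\<^sup>2 \<le> (norm ((y - p) + scaleC (- (complex_of_real t * c)) m))\<^sup>2"
      by (simp add: power_mono)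
    then show ?thesis
      unfolding power2_norm_eq_cinner hermitian_form_Re_shift[OF hermitian_form_cinner] c_def
      by simp
  qed
  then have "(cmod c)\<^sup>2 \<le> 0 * Re (cinner m m)"
    by (rule quadratic_nonneg_imp_le) (simp_all add: cinner_ge_zero)
  then show ?thesis
    unfolding c_def by simp
qed

definition proj :: "'a::complex_inner set \<Rightarrow> 'a \<Rightarrow> 'a" where
  "proj M y = (SOME p. p \<in> M \<and> (\<forall>m\<in>M. cinner (y - p) m = 0))"

context
  fixes M :: "'a::chilbert_space set"
  assumes closed: "closed M" and M: "csubspace M"
begin

lemma proj_in: "proj M y \<in> M"
  and proj_orthogonal: "m \<in> M \<Longrightarrow> cinner (y - proj M y) m = 0"
proof -
  obtain p where p: "p \<in> M" "\<And>m. m \<in> M \<Longrightarrow> norm (y - p) \<le> norm (y - m)"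
    using closed_csubspace_nearest_point[OF closed M, of y] by blast
  then have "\<forall>m\<in>M. cinner (y - p) m = 0"
    using nearest_point_orthogonal[OF M] by blast
  with p(1) have "\<exists>p. p \<in> M \<and> (\<forall>m\<in>M. cinner (y - p) m = 0)"
    by blast
  then have "proj M y \<in> M \<and> (\<forall>m\<in>M. cinner (y - proj M y) m = 0)"
    unfolding proj_def by (rule someI_ex)
  then show "proj M y \<in> M" "m \<in> M \<Longrightarrow> cinner (y - proj M y) m = 0"
    by blast+
qed

lemma proj_unique:
  assumes "p \<in> M" and "\<And>m. m \<in> M \<Longrightarrow> cinner (y - p) m = 0"
  shows "proj M y = p"
proof -
  define d where "d = proj M y - p"
  have "d \<in> M"
    unfolding d_def using csubspace_diff[OF M proj_in \<open>p \<in> M\<close>] .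
  have "d = (y - p) - (y - proj M y)"
    unfolding d_def by simp
  then have "cinner d d = cinner (y - p) d - cinner (y - proj M y) d"
    by (metis cinner_diff_left)
  also have "\<dots> = 0"
    using assms(2)[OF \<open>d \<in> M\<close>] proj_orthogonal[OF \<open>d \<in> M\<close>] by simp
  finally show ?thesis
    unfolding d_def by (simp add: cinner_eq_zero_iff)
qed

lemma bounded_op_proj: "bounded_op (proj M)"
  unfolding bounded_op_def
proof (intro conjI allI)
  have add: "a + b \<in> M" and scale: "scaleC c a \<in> M" if "a \<in> M" "b \<in> M" for a b c
    using M that unfolding csubspace_def by blast+
  show "proj M (x + y) = proj M x + proj M y" for x y
  proof (rule proj_unique)
    show "proj M x + proj M y \<in> M"
      by (rule add[OF proj_in proj_in])
    show "cinner (x + y - (proj M x + proj M y)) m = 0" if "m \<in> M" for m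
      by (simp only: add_diff_add cinner_add_left proj_orthogonal[OF that]) simp
  qed
  show "proj M (scaleC c x) = scaleC c (proj M x)" for c x
  proof (rule proj_unique)
    show "scaleC c (proj M x) \<in> M"
      by (rule scale[OF proj_in proj_in])
    show "cinner (scaleC c x - scaleC c (proj M x)) m = 0" if "m \<in> M" for m
      by (simp only: scaleC_diff_right[symmetric] cinner_scaleC_left proj_orthogonal[OF that]) simp
  qed
  have "norm (proj M x) \<le> 1 * norm x" for x
  proof -
    have "cinner (proj M x) (x - proj M x) = 0"
      using proj_orthogonal[OF proj_in, of x x] cinner_commute[of "proj M x" "x - proj M x"] by simp
    then have "(norm x)\<^sup>2 = (norm (proj M x))\<^sup>2 + (norm (x - proj M x))\<^sup>2"
      using norm_add_Pythagorean_cinner[of "proj M x" "x - proj M x"] by simp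
    then show ?thesis
      by (simp add: power2_le_imp_le)
  qed
  then show "\<exists>K. \<forall>x. norm (proj M x) \<le> K * norm x"
    by blast
qed

end

section \<open>Riesz representation and Hilbert-space adjoints\<close>

lemma functional_eq_cinner_if_orthogonal_kernel:
  fixes f :: "'a::complex_inner \<Rightarrow> complex"
  assumes add: "\<And>x y. f (x + y) = f x + f y" and scale: "\<And>c x. f (scaleC c x) = c * f x"
    and "cinner u u \<noteq> 0" and orth: "\<And>m. f m = 0 \<Longrightarrow> cinner m u = 0"
  shows "f x = cinner x (scaleC (cnj (f u / cinner u u)) u)"
proof -
  have "f (x - y) = f x - f y" for x y
    using add[of "x - y" y] by simp
  then have "f (scaleC (f x) u - scaleC (f u) x) = 0"
    by (simp add: scale mult.commute)
  then have "cinner (scaleC (f x) u - scaleC (f u) x) u = 0"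
    by (rule orth)
  then have "f x * cinner u u = f u * cinner x u"
    by (simp add: cinner_diff_left cinner_scaleC_left)
  with \<open>cinner u u \<noteq> 0\<close> show ?thesis
    by (simp add: cinner_scaleC_right field_simps)
qed

lemma Riesz_representation:
  fixes f :: "'a::chilbert_space \<Rightarrow> complex"
  assumes add: "\<And>x y. f (x + y) = f x + f y" and scale: "\<And>c x. f (scaleC c x) = c * f x"
    and bound: "\<And>x. cmod (f x) \<le> K * norm x"
  shows "\<exists>w. \<forall>x. f x = cinner x w"
proof (cases "\<forall>x. f x = 0")
  case True
  then show ?thesis
    by (intro exI[of _ 0]) simp
next
  case False
  then obtain z where "f z \<noteq> 0"
    by blast
  have "bounded_linear f"
    by (rule bounded_linear_intro[of _ K])
      (simp_all add: add scaleR_scaleC scale scaleR_conv_of_real bound mult.commute)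
  define N where "N = {x. f x = 0}"
  have "closed N"
    unfolding N_def
    by (intro closed_Collect_eq linear_continuous_on[OF \<open>bounded_linear f\<close>] continuous_on_const)
  have N: "csubspace N"
    using add[of 0 0] unfolding csubspace_def N_def by (simp add: add scale)
  define u where "u = z - proj N z"
  have "f u = f z"
    using proj_in[OF \<open>closed N\<close> N, of z] add[of u "proj N z"] unfolding u_def N_def by simp
  then have "u \<noteq> 0"
    using \<open>f z \<noteq> 0\<close> add[of 0 0] by auto
  moreover have "cinner m u = 0" if "f m = 0" for m
    using proj_orthogonal[OF \<open>closed N\<close> N, of m z] cinner_commute[of m u] that
    unfolding u_def N_def by simp
  ultimately show ?thesis
    using functional_eq_cinner_if_orthogonal_kernel[OF add scale] by (meson cinner_eq_zero_iff)
qed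

lemma cinner_cadj:
  fixes T :: "'a::chilbert_space \<Rightarrow> 'a"
  assumes T: "bounded_op T"
  shows "cinner (T x) y = cinner x (cadj T y)"
proof -
  obtain K where K: "\<And>x. norm (T x) \<le> K * norm x"
    using bounded_op_pos_bounded[OF T] by blast
  have "\<exists>w. \<forall>x. cinner (T x) y = cinner x w" for y
  proof (rule Riesz_representation[of _ "K * norm y"])
    show "cmod (cinner (T x) y) \<le> K * norm y * norm x" for x
    proof -
      have "cmod (cinner (T x) y) \<le> norm (T x) * norm y"
        by (rule cinner_Cauchy_Schwarz)
      also have "\<dots> \<le> K * norm x * norm y"
        by (intro mult_right_mono K) simp
      finally show ?thesis
        by (simp add: mult_ac)
    qed
  qed (simp_all add: bounded_op_add[OF T] bounded_op_scaleC[OF T] cinner_add_left cinner_scaleC_left)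
  then obtain S where S: "\<And>x y. cinner (T x) y = cinner x (S y)"
    by metis
  have "\<exists>!S. \<forall>x y. cinner (T x) y = cinner x (S y)"
  proof (rule ex1I[of _ S])
    show "S' = S" if S': "\<forall>x y. cinner (T x) y = cinner x (S' y)" for S'
    proof (rule ext, rule cinner_ext)
      show "cinner z (S' y) = cinner z (S y)" for y z
        using S'[rule_format, of z y] S[of z y] by simp
    qed
  qed (use S in blast)
  then have "\<forall>x y. cinner (T x) y = cinner x (cadj T y)"
    unfolding cadj_def by (rule theI')
  then show ?thesis
    by blast
qed

section \<open>A-adjoints and the reduced solution\<close>

definition A_adjoint :: "('a::complex_inner \<Rightarrow> 'a) \<Rightarrow> ('a \<Rightarrow> 'a) \<Rightarrow> ('a \<Rightarrow> 'a) \<Rightarrow> bool" where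
  "A_adjoint A T X \<longleftrightarrow> (\<forall>x y. cinner (A (T x)) y = cinner (A x) (X y))"

lemma A_adjointD: "A_adjoint A T X \<Longrightarrow> cinner (A (T x)) y = cinner (A x) (X y)"
  unfolding A_adjoint_def by blast

lemma A_cnj: "positive_op A \<Longrightarrow> cinner (A x) y = cnj (cinner (A y) x)"
  by (metis cinner_commute positive_op_selfadjoint)

lemma A_adjoint_sym:
  assumes A: "positive_op A" and "A_adjoint A T X"
  shows "A_adjoint A X T"
  unfolding A_adjoint_def
proof (intro allI)
  fix x y
  have "cinner (A (X x)) y = cnj (cinner (A y) (X x))"
    by (rule A_cnj[OF A])
  also have "\<dots> = cinner (A x) (T y)"
    using A_adjointD[OF assms(2), of y x] A_cnj[OF A, of x "T y"] by simp
  finally show "cinner (A (X x)) y = cinner (A x) (T y)" .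
qed

lemma A_adjoint_comp: "A_adjoint A T X \<Longrightarrow> A_adjoint A T' X' \<Longrightarrow> A_adjoint A (T \<circ> T') (X' \<circ> X)"
  unfolding A_adjoint_def by simp

lemma A_adjoint_funpow: "A_adjoint A P P \<Longrightarrow> A_adjoint A (P ^^ n) (P ^^ n)"
proof (induct n)
  case (Suc n)
  then have "A_adjoint A (P \<circ> P ^^ n) (P ^^ n \<circ> P)"
    by (intro A_adjoint_comp)
  then show ?case
    by (simp only: funpow_Suc_right[symmetric] funpow.simps(2)[symmetric])
qed (simp add: A_adjoint_def)

lemma A_inner_funpow_add:
  assumes "A_adjoint A P P"
  shows "cinner (A ((P ^^ (a + b)) x)) y = cinner (A ((P ^^ a) x)) ((P ^^ b) y)"
  using A_adjointD[OF A_adjoint_funpow[OF assms, of b], of "(P ^^ a) x" y]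
  by (simp add: funpow_add add.commute[of a b])

lemma A_adjoint_add:
  assumes "bounded_op A" "A_adjoint A T X" "A_adjoint A T' X'"
  shows "A_adjoint A (\<lambda>x. T x + T' x) (\<lambda>x. X x + X' x)"
  using assms
  by (simp add: A_adjoint_def bounded_op_add cinner_add_left cinner_add_right)

lemma A_adjoint_sum:
  assumes A: "bounded_op A" and "\<And>i. i \<in> I \<Longrightarrow> A_adjoint A (F i) (G i)"
  shows "A_adjoint A (\<lambda>x. \<Sum>i\<in>I. F i x) (\<lambda>x. \<Sum>i\<in>I. G i x)"
  using assms(2) unfolding A_adjoint_def
  by (simp add: bounded_op_sum[OF A] cinner_sum_left cinner_sum_right)

text \<open>The reduced solution is obtained from an arbitrary A-adjoint W of T by projecting orthogonally
  onto the closure of the range of A; the projection is invisible to A.\<close>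

lemma A_proj_closure_range:
  fixes A :: "'a::chilbert_space \<Rightarrow> 'a"
  assumes A: "positive_op A"
  shows "A (proj (closure (range A)) v) = A v"
proof -
  define M where "M = closure (range A)"
  have M: "closed M" "csubspace M"
    unfolding M_def by (simp_all add: csubspace_closure csubspace_range positive_op_bounded[OF A])
  have "A (v - proj M v) = 0"
  proof (rule cinner_ext)
    fix z
    have "A z \<in> M"
      unfolding M_def by (rule subsetD[OF closure_subset rangeI])
    then have "cinner (v - proj M v) (A z) = 0"
      by (rule proj_orthogonal[OF M])
    then have "cinner (A z) (v - proj M v) = 0"
      using cinner_commute[of "A z" "v - proj M v"] by simp
    then show "cinner z (A (v - proj M v)) = cinner z 0"
      using positive_op_selfadjoint[OF A, of z "v - proj M v"] by simp
  qed
  then show ?thesis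
    unfolding M_def by (simp add: bounded_op_diff[OF positive_op_bounded[OF A]])
qed

lemma A_zero_in_closure_range_imp_zero:
  assumes A: "positive_op A" and "A d = 0" and "d \<in> closure (range A)"
  shows "d = 0"
proof -
  have "cinner m d = 0" if "m \<in> range A" for m
    using that \<open>A d = 0\<close> positive_op_selfadjoint[OF A] by auto
  then have "cinner d d = 0"
    using orthogonal_closure \<open>d \<in> closure (range A)\<close> by blast
  then show ?thesis
    by (simp add: cinner_eq_zero_iff)
qed

lemma A_comp_eq_cadj_if_A_adjoint:
  fixes A :: "'a::chilbert_space \<Rightarrow> 'a"
  assumes A: "positive_op A" and "bounded_op T" and "A_adjoint A T W"
  shows "A (W y) = cadj T (A y)"
proof (rule cinner_ext)
  fix z
  have "cinner z (A (W y)) = cinner (A (T z)) y"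
    using A_adjointD[OF \<open>A_adjoint A T W\<close>, of z y] positive_op_selfadjoint[OF A, of z "W y"] by simp
  also have "\<dots> = cinner z (cadj T (A y))"
    using positive_op_selfadjoint[OF A, of "T z" y] cinner_cadj[OF \<open>bounded_op T\<close>, of z "A y"] by simp
  finally show "cinner z (A (W y)) = cinner z (cadj T (A y))" .
qed

lemma A_adjoint_if_A_comp_eq_cadj:
  fixes A :: "'a::chilbert_space \<Rightarrow> 'a"
  assumes A: "positive_op A" and "bounded_op T" and "\<And>y. A (X y) = cadj T (A y)"
  shows "A_adjoint A T X"
  unfolding A_adjoint_def
proof (intro allI)
  fix x y
  have "cinner (A (T x)) y = cinner x (cadj T (A y))"
    using positive_op_selfadjoint[OF A, of "T x" y] cinner_cadj[OF \<open>bounded_op T\<close>, of x "A y"] by simp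
  also have "\<dots> = cinner (A x) (X y)"
    using assms(3)[of y] positive_op_selfadjoint[OF A, of x "X y"] by simp
  finally show "cinner (A (T x)) y = cinner (A x) (X y)" .
qed

lemma eq_if_A_eq_in_closure_range:
  fixes A :: "'a::complex_inner \<Rightarrow> 'a"
  assumes A: "positive_op A" and "\<And>y. A (X y) = A (X' y)"
    and "range X \<subseteq> closure (range A)" "range X' \<subseteq> closure (range A)"
  shows "X = X'"
proof
  fix y
  have "A (X y - X' y) = 0"
    using assms(2)[of y] by (simp add: bounded_op_diff[OF positive_op_bounded[OF A]])
  moreover have "X y - X' y \<in> closure (range A)"
    using assms(3,4) csubspace_diff[OF csubspace_closure[OF csubspace_range[OF positive_op_bounded[OF A]]]]
    by blast
  ultimately have "X y - X' y = 0"
    by (rule A_zero_in_closure_range_imp_zero[OF A])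
  then show "X y = X' y"
    by simp
qed

lemma sharpA_reduced_solution:
  fixes A :: "'a::chilbert_space \<Rightarrow> 'a"
  assumes A: "positive_op A" and T: "in_BA A T"
  shows "bounded_op (sharpA A T)" and "A (sharpA A T x) = cadj T (A x)"
proof -
  define M where "M = closure (range A)"
  have M: "closed M" "csubspace M"
    unfolding M_def by (simp_all add: csubspace_closure csubspace_range positive_op_bounded[OF A])
  obtain W where "bounded_op T" and "bounded_op W" and W: "A_adjoint A T W"
    using T unfolding in_BA_def A_inner_def A_adjoint_def by blast
  have AW: "A (W y) = cadj T (A y)" for y
    by (rule A_comp_eq_cadj_if_A_adjoint[OF A \<open>bounded_op T\<close> W])
  let ?reduced = "\<lambda>X. bounded_op X \<and> (\<forall>x. A (X x) = cadj T (A x)) \<and> range X \<subseteq> M"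
  have "bounded_op (proj M \<circ> W)"
    by (rule bounded_op_comp[OF bounded_op_proj[OF M] \<open>bounded_op W\<close>])
  moreover have "A ((proj M \<circ> W) x) = cadj T (A x)" for x
    using A_proj_closure_range[OF A, of "W x"] AW[of x] unfolding M_def by simp
  moreover have "range (proj M \<circ> W) \<subseteq> M"
    using proj_in[OF M] by auto
  ultimately have "?reduced (proj M \<circ> W)"
    by blast
  moreover have "X' = X" if "?reduced X'" "?reduced X" for X X'
    using eq_if_A_eq_in_closure_range[OF A, of X' X] that unfolding M_def by simp
  ultimately have "\<exists>!X. ?reduced X"
    by blast
  then have "?reduced (sharpA A T)"
    unfolding sharpA_def M_def by (rule theI')
  then show "bounded_op (sharpA A T)" "A (sharpA A T x) = cadj T (A x)"
    by blast+
qed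

lemma A_adjoint_sharpA:
  fixes A :: "'a::chilbert_space \<Rightarrow> 'a"
  assumes A: "positive_op A" and T: "in_BA A T"
  shows "A_adjoint A T (sharpA A T)"
  using T sharpA_reduced_solution(2)[OF A T]
  by (intro A_adjoint_if_A_comp_eq_cadj[OF A]) (auto simp: in_BA_def)

lemma A_norm_nonneg: "positive_op A \<Longrightarrow> 0 \<le> A_norm A v"
  unfolding A_norm_def by (simp add: positive_op_nonneg)

lemma power2_A_norm: "positive_op A \<Longrightarrow> (A_norm A v)\<^sup>2 = Re (cinner (A v) v)"
  unfolding A_norm_def by (simp add: positive_op_nonneg)

lemma hermitian_form_A_op:
  assumes A: "positive_op A" and P: "bounded_op P" and "A_adjoint A P P"
    and nonneg: "\<And>u. 0 \<le> Re (cinner (A (P u)) u)"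
  shows "hermitian_form (\<lambda>u v. cinner (A (P u)) v)"
  unfolding hermitian_form_def
proof (intro conjI allI)
  note A' = positive_op_bounded[OF A]
  show "cinner (A (P (x + y))) z = cinner (A (P x)) z + cinner (A (P y)) z" for x y z
    by (simp add: bounded_op_add[OF P] bounded_op_add[OF A'] cinner_add_left)
  show "cinner (A (P (scaleC c x))) y = c * cinner (A (P x)) y" for c x y
    by (simp add: bounded_op_scaleC[OF P] bounded_op_scaleC[OF A'] cinner_scaleC_left)
  show "cinner (A (P x)) y = cnj (cinner (A (P y)) x)" for x y
    using A_adjointD[OF \<open>A_adjoint A P P\<close>, of x y] A_cnj[OF A, of x "P y"] by simp
qed (rule nonneg)

lemma hermitian_form_A: "positive_op A \<Longrightarrow> hermitian_form (\<lambda>u v. cinner (A u) v)"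
  using hermitian_form_A_op[of A "\<lambda>x. x"] by (simp add: bounded_op_id A_adjoint_def positive_op_nonneg)

lemma A_Cauchy_Schwarz: "positive_op A \<Longrightarrow> cmod (cinner (A u) v) \<le> A_norm A u * A_norm A v"
  unfolding A_norm_def using hermitian_form_Cauchy_Schwarz_sqrt[OF hermitian_form_A] by blast

lemma log_convex_seq_power_le_aux:
  fixes g :: "nat \<Rightarrow> real"
  assumes g0: "g 0 = 1" and nonneg: "\<And>j. 0 \<le> g j"
    and log_convex: "\<And>j. (g (Suc j))\<^sup>2 \<le> g j * g (Suc (Suc j))"
  shows "g k ^ Suc k \<le> g (Suc k) ^ k"
proof (induct k)
  case (Suc k)
  have "g (Suc k) ^ k * g (Suc k) ^ Suc (Suc k) = ((g (Suc k))\<^sup>2) ^ Suc k"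
    by (simp add: mult_2 flip: power_add power_mult)
  also have "\<dots> \<le> (g k * g (Suc (Suc k))) ^ Suc k"
    by (rule power_mono[OF log_convex]) simp
  also have "\<dots> = g k ^ Suc k * g (Suc (Suc k)) ^ Suc k"
    by (simp add: power_mult_distrib)
  also have "\<dots> \<le> g (Suc k) ^ k * g (Suc (Suc k)) ^ Suc k"
    by (rule mult_right_mono[OF Suc]) (simp add: nonneg)
  finally have *: "g (Suc k) ^ k * g (Suc k) ^ Suc (Suc k) \<le> g (Suc k) ^ k * g (Suc (Suc k)) ^ Suc k" .
  show ?case
  proof (cases "g (Suc k) = 0")
    case False
    then have "0 < g (Suc k) ^ k"
      using nonneg by (simp add: order_le_neq_trans)
    with * show ?thesis
      by (rule mult_left_le_imp_le)
  qed (simp add: nonneg)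
qed (simp add: g0)

lemma log_convex_seq_power_le:
  fixes g :: "nat \<Rightarrow> real"
  assumes g0: "g 0 = 1" and nonneg: "\<And>j. 0 \<le> g j"
    and log_convex: "\<And>j. (g (Suc j))\<^sup>2 \<le> g j * g (Suc (Suc j))"
  shows "g 1 ^ n \<le> g n"
proof (induct n)
  case (Suc n)
  show ?case
  proof (cases n)
    case (Suc m)
    have "(g 1 ^ Suc n) ^ n = (g 1 ^ n) ^ Suc n"
      by (metis power_mult mult.commute)
    also have "\<dots> \<le> g n ^ Suc n"
      by (rule power_mono[OF Suc.hyps]) (simp add: nonneg)
    also have "\<dots> \<le> g (Suc n) ^ n"
      by (rule log_convex_seq_power_le_aux[OF g0 nonneg log_convex])
    finally have "(g 1 ^ Suc n) ^ Suc m \<le> g (Suc n) ^ Suc m"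
      using Suc by simp
    then show ?thesis
      by (rule power_le_imp_le_base) (simp add: nonneg)
  qed simp
qed (simp add: g0)

lemma convex_on_nonneg_power: "convex_on {0::real..} (\<lambda>x. x ^ n)"
  by (cases "even n")
    (simp_all add: convex_power_odd convex_on_subset[OF convex_power_even])

lemma power_mean_le:
  fixes p q :: real
  assumes "0 \<le> p" "0 \<le> q"
  shows "((p + q) / 2) ^ n \<le> (p ^ n + q ^ n) / 2"
  using convex_onD[OF convex_on_nonneg_power, of "1/2" p q] assms by (simp add: add_divide_distrib)

lemma sum_power_le_card_power:
  fixes c :: "'i \<Rightarrow> real"
  assumes "finite I" "I \<noteq> {}" and nonneg: "\<And>i. i \<in> I \<Longrightarrow> 0 \<le> c i" and "0 < m"
  shows "(\<Sum>i\<in>I. c i) ^ m \<le> real (card I) ^ (m - 1) * (\<Sum>i\<in>I. c i ^ m)"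
proof -
  define k where "k = real (card I)"
  have "k > 0"
    unfolding k_def using assms(1,2) by (simp add: card_gt_0_iff)
  have "(\<Sum>i\<in>I. (1 / k) *\<^sub>R c i) ^ m \<le> (\<Sum>i\<in>I. (1 / k) * c i ^ m)"
    using convex_on_sum[OF assms(1,2) convex_on_nonneg_power, of "\<lambda>_. 1 / k" c] \<open>k > 0\<close> nonneg
    by (simp add: k_def)
  then have "(\<Sum>i\<in>I. c i) ^ m / k ^ m \<le> (\<Sum>i\<in>I. c i ^ m) / k"
    by (simp add: power_divide flip: sum_divide_distrib sum_distrib_left)
  moreover have "k ^ m = k * k ^ (m - 1)"
    using \<open>0 < m\<close> by (simp add: power_eq_if)
  ultimately show ?thesis
    using \<open>k > 0\<close> unfolding k_def[symmetric] by (simp add: field_simps)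
qed

section \<open>A McCarthy-type inequality for A-positive operators\<close>

context
  fixes A P :: "'a::complex_inner \<Rightarrow> 'a"
  assumes A: "positive_op A" and P: "bounded_op P" and P_adjoint: "A_adjoint A P P"
    and P_nonneg: "\<And>u. 0 \<le> Re (cinner (A (P u)) u)"
begin

lemma hermitian_form_A_funpow: "r < 2 \<Longrightarrow> hermitian_form (\<lambda>u v. cinner (A ((P ^^ r) u)) v)"
  using hermitian_form_A[OF A] hermitian_form_A_op[OF A P P_adjoint P_nonneg]
  by (auto simp: less_2_cases_iff)

lemma A_inner_funpow_shift:
  "cinner (A ((P ^^ r) ((P ^^ a) x))) ((P ^^ b) x) = cinner (A ((P ^^ (r + a + b)) x)) x"
  using A_inner_funpow_add[OF P_adjoint, of "r + a" b x x] by (simp add: funpow_add)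

text \<open>Writing j = 2m + r with r < 2, every value below is a value of the hermitian form
  cinner (A (P^r u)) v at the vectors P^m x and P^(m+1) x.\<close>

lemma A_inner_funpow_nonneg: "0 \<le> Re (cinner (A ((P ^^ j) x)) x)"
proof -
  have "j mod 2 + j div 2 + j div 2 = j"
    by presburger
  then show ?thesis
    using hermitian_form_nonneg[OF hermitian_form_A_funpow[of "j mod 2"], of "(P ^^ (j div 2)) x"]
      A_inner_funpow_shift[of "j mod 2" "j div 2" x "j div 2"]
    by simp
qed

lemma A_inner_funpow_log_convex:
  fixes x :: 'a
  defines "g \<equiv> \<lambda>j. Re (cinner (A ((P ^^ j) x)) x)"
  shows "(g (Suc j))\<^sup>2 \<le> g j * g (Suc (Suc j))"
proof -
  define r m where "r = j mod 2" and "m = j div 2"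
  define u v where "u = (P ^^ m) x" and "v = (P ^^ Suc m) x"
  let ?B = "\<lambda>u v. cinner (A ((P ^^ r) u)) v"
  have j: "r + m + m = j" "r + m + Suc m = Suc j" "r + Suc m + Suc m = Suc (Suc j)"
    unfolding r_def m_def by presburger+
  have "g j = Re (?B u u)" "g (Suc j) = Re (?B u v)" "g (Suc (Suc j)) = Re (?B v v)"
    unfolding g_def u_def v_def A_inner_funpow_shift by (simp_all add: j del: funpow.simps)
  moreover have "(Re (?B u v))\<^sup>2 \<le> (cmod (?B u v))\<^sup>2"
    by (simp add: cmod_power2)
  ultimately show ?thesis
    using hermitian_form_Cauchy_Schwarz[OF hermitian_form_A_funpow, of r u v] by (simp add: r_def)
qed

lemma A_inner_power_le_A_inner_funpow:
  assumes "A_norm A x = 1"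
  shows "(Re (cinner (A (P x)) x)) ^ n \<le> Re (cinner (A ((P ^^ n) x)) x)"
  using log_convex_seq_power_le[of "\<lambda>j. Re (cinner (A ((P ^^ j) x)) x)"]
    A_inner_funpow_nonneg A_inner_funpow_log_convex power2_A_norm[OF A, of x] assms
  by simp

end

section \<open>A-boundedness of A-selfadjoint operators\<close>

lemma A_norm_le_norm:
  assumes A: "positive_op A"
  shows "\<exists>C\<ge>0. \<forall>v. A_norm A v \<le> C * norm v"
proof -
  obtain K where "K > 0" and K: "\<And>x. norm (A x) \<le> K * norm x"
    using bounded_op_pos_bounded[OF positive_op_bounded[OF A]] by blast
  have "(A_norm A v)\<^sup>2 \<le> (sqrt K * norm v)\<^sup>2" for v
  proof -
    have "(A_norm A v)\<^sup>2 \<le> cmod (cinner (A v) v)"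
      unfolding power2_A_norm[OF A] by (rule complex_Re_le_cmod)
    also have "\<dots> \<le> K * norm v * norm v"
      by (rule order_trans[OF cinner_Cauchy_Schwarz mult_right_mono[OF K]]) simp
    also have "\<dots> = (sqrt K * norm v)\<^sup>2"
      using \<open>K > 0\<close> by (simp add: power2_eq_square power_mult_distrib)
    finally show ?thesis .
  qed
  then have "A_norm A v \<le> sqrt K * norm v" for v
    by (rule power2_le_imp_le) (use \<open>K > 0\<close> in simp)
  then show ?thesis
    using \<open>K > 0\<close> by (intro exI[of _ "sqrt K"]) auto
qed

lemma norm_funpow_le:
  fixes Q :: "'a::real_normed_vector \<Rightarrow> 'a"
  assumes "0 \<le> K" and "\<And>x. norm (Q x) \<le> K * norm x"
  shows "norm ((Q ^^ n) x) \<le> K ^ n * norm x"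
proof (induct n)
  case (Suc n)
  have "norm ((Q ^^ Suc n) x) \<le> K * norm ((Q ^^ n) x)"
    using assms(2)[of "(Q ^^ n) x"] by simp
  also have "\<dots> \<le> K * (K ^ n * norm x)"
    by (rule mult_left_mono[OF Suc assms(1)])
  finally show ?case
    by (simp add: mult.assoc)
qed simp

lemma A_norm_power_le_A_norm_funpow:
  assumes A: "positive_op A" and "A_adjoint A Q Q" and "A_norm A x = 1"
  shows "(A_norm A (Q x)) ^ (2 ^ m) \<le> A_norm A ((Q ^^ (2 ^ m)) x)"
proof (induct m)
  case (Suc m)
  have square: "(A_norm A ((Q ^^ j) x))\<^sup>2 \<le> A_norm A ((Q ^^ (j + j)) x)" for j
  proof -
    have "(A_norm A ((Q ^^ j) x))\<^sup>2 = Re (cinner (A ((Q ^^ (j + j)) x)) x)"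
      unfolding power2_A_norm[OF A] A_inner_funpow_add[OF \<open>A_adjoint A Q Q\<close>] ..
    also have "\<dots> \<le> A_norm A ((Q ^^ (j + j)) x) * A_norm A x"
      by (rule order_trans[OF complex_Re_le_cmod A_Cauchy_Schwarz[OF A]])
    finally show ?thesis
      using \<open>A_norm A x = 1\<close> by simp
  qed
  have "(A_norm A (Q x)) ^ (2 ^ Suc m) = ((A_norm A (Q x)) ^ (2 ^ m))\<^sup>2"
    by (simp add: power_mult[symmetric] mult.commute)
  also have "\<dots> \<le> (A_norm A ((Q ^^ (2 ^ m)) x))\<^sup>2"
    by (rule power_mono[OF Suc]) (simp add: A_norm_nonneg[OF A])
  also have "\<dots> \<le> A_norm A ((Q ^^ (2 ^ Suc m)) x)"
    using square[of "2 ^ m"] by (simp add: mult_2)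
  finally show ?case .
qed simp

text \<open>If the A-norm of Q x exceeded the norm bound K of Q, the left-hand side of the previous lemma
  would grow doubly exponentially in m, while the right-hand side grows at most like K^(2^m).\<close>

lemma A_selfadjoint_A_bounded:
  assumes A: "positive_op A" and Q: "bounded_op Q" and "A_adjoint A Q Q"
  shows "\<exists>K. \<forall>x. A_norm A x = 1 \<longrightarrow> A_norm A (Q x) \<le> K"
proof -
  obtain K where "K > 0" and K: "\<And>x. norm (Q x) \<le> K * norm x"
    using bounded_op_pos_bounded[OF Q] by blast
  obtain C where "C \<ge> 0" and C: "\<And>v. A_norm A v \<le> C * norm v"
    using A_norm_le_norm[OF A] by blast
  have "A_norm A (Q x) \<le> K" if "A_norm A x = 1" for x
  proof (rule ccontr)
    assume "\<not> A_norm A (Q x) \<le> K"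
    then have "1 < A_norm A (Q x) / K"
      using \<open>K > 0\<close> by simp
    then obtain N where N: "C * norm x < (A_norm A (Q x) / K) ^ N"
      using real_arch_pow by blast
    have "(A_norm A (Q x)) ^ (2 ^ N) \<le> A_norm A ((Q ^^ (2 ^ N)) x)"
      by (rule A_norm_power_le_A_norm_funpow[OF A \<open>A_adjoint A Q Q\<close> that])
    also have "\<dots> \<le> C * norm ((Q ^^ (2 ^ N)) x)"
      by (rule C)
    also have "\<dots> \<le> C * (K ^ (2 ^ N) * norm x)"
      using norm_funpow_le[of K Q] K \<open>K > 0\<close> \<open>C \<ge> 0\<close> by (simp add: mult_left_mono)
    finally have "(A_norm A (Q x)) ^ (2 ^ N) \<le> C * (K ^ (2 ^ N) * norm x)" .
    then have "(A_norm A (Q x) / K) ^ (2 ^ N) \<le> C * norm x"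
      using \<open>K > 0\<close> by (simp add: power_divide divide_le_eq mult_ac)
    moreover have "(A_norm A (Q x) / K) ^ N \<le> (A_norm A (Q x) / K) ^ (2 ^ N)"
      using \<open>1 < A_norm A (Q x) / K\<close> less_exp[of N] by (intro power_increasing) auto
    ultimately show False
      using N by simp
  qed
  then show ?thesis
    by blast
qed

lemma Re_A_inner_le_A_opnorm:
  assumes A: "positive_op A" and Q: "bounded_op Q" and "A_adjoint A Q Q" and "A_norm A x = 1"
  shows "Re (cinner (A (Q x)) x) \<le> A_opnorm A Q"
proof -
  obtain K where "\<forall>x. A_norm A x = 1 \<longrightarrow> A_norm A (Q x) \<le> K"
    using A_selfadjoint_A_bounded[OF assms(1-3)] by blast
  then have bdd: "bdd_above {A_norm A (Q x) | x. A_norm A x = 1}"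
    by (intro bdd_aboveI[of _ K]) blast
  have "Re (cinner (A (Q x)) x) \<le> A_norm A (Q x) * A_norm A x"
    by (rule order_trans[OF complex_Re_le_cmod A_Cauchy_Schwarz[OF A]])
  also have "\<dots> \<le> A_opnorm A Q"
    unfolding A_opnorm_def using \<open>A_norm A x = 1\<close> by (auto intro: cSup_upper[OF _ bdd])
  finally show ?thesis .
qed

lemma cmod_A_inner_square_le:
  assumes A: "positive_op A" and "A_adjoint A T X" and "A_norm A x = 1"
  shows "(cmod (cinner (A (T x)) x))\<^sup>2 \<le> Re (cinner (A (X (T x))) x)"
proof -
  have "(cmod (cinner (A (T x)) x))\<^sup>2 \<le> (A_norm A (T x) * A_norm A x)\<^sup>2"
    by (rule power_mono[OF A_Cauchy_Schwarz[OF A]]) simp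
  also have "\<dots> = Re (cinner (A (X (T x))) x)"
    using A_adjointD[OF A_adjoint_sym[OF A \<open>A_adjoint A T X\<close>], of "T x" x]
    by (simp add: power_mult_distrib power2_A_norm[OF A] \<open>A_norm A x = 1\<close>)
  finally show ?thesis .
qed

lemma cmod_A_inner_power_le:
  assumes A: "positive_op A" and T: "bounded_op T" and X: "bounded_op X" and TX: "A_adjoint A T X"
    and x: "A_norm A x = 1"
  shows "(cmod (cinner (A (T x)) x)) ^ (2 * n)
    \<le> 1/2 * Re (cinner (A (((X \<circ> T) ^^ n) x + ((T \<circ> X) ^^ n) x)) x)"
proof -
  have XT: "A_adjoint A X T"
    by (rule A_adjoint_sym[OF A TX])
  define p where "p = Re (cinner (A (X (T x))) x)"
  define q where "q = Re (cinner (A (T (X x))) x)"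
  have nonneg: "0 \<le> Re (cinner (A (X (T u))) u)" "0 \<le> Re (cinner (A (T (X u))) u)" for u
    using A_adjointD[OF XT, of "T u" u] A_adjointD[OF TX, of "X u" u] by (simp_all add: positive_op_nonneg[OF A])
  have "cmod (cinner (A (T x)) x) = cmod (cinner (A (X x)) x)"
    using A_adjointD[OF TX, of x x] A_cnj[OF A, of x "X x"] by simp
  then have "(cmod (cinner (A (T x)) x))\<^sup>2 \<le> (p + q) / 2"
    using cmod_A_inner_square_le[OF A TX x] cmod_A_inner_square_le[OF A XT x] unfolding p_def q_def by simp
  then have "(cmod (cinner (A (T x)) x)) ^ (2 * n) \<le> ((p + q) / 2) ^ n"
    by (simp add: power_mult power_mono)
  also have "\<dots> \<le> (p ^ n + q ^ n) / 2"
    by (rule power_mean_le) (simp_all add: p_def q_def nonneg)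
  also have "\<dots> \<le> (Re (cinner (A (((X \<circ> T) ^^ n) x)) x) + Re (cinner (A (((T \<circ> X) ^^ n) x)) x)) / 2"
    using A_inner_power_le_A_inner_funpow[OF A bounded_op_comp[OF X T] A_adjoint_comp[OF XT TX] _ x, of n]
      A_inner_power_le_A_inner_funpow[OF A bounded_op_comp[OF T X] A_adjoint_comp[OF TX XT] _ x, of n]
      nonneg
    unfolding p_def q_def by simp
  also have "\<dots> = 1/2 * Re (cinner (A (((X \<circ> T) ^^ n) x + ((T \<circ> X) ^^ n) x)) x)"
    by (simp add: bounded_op_add[OF positive_op_bounded[OF A]] cinner_add_left)
  finally show ?thesis .
qed

lemma cmod_A_inner_sum_power_le:
  assumes A: "positive_op A" and "finite I" "I \<noteq> {}" and "0 < n"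
    and ops: "\<And>i. i \<in> I \<Longrightarrow> bounded_op (T i) \<and> bounded_op (X i) \<and> A_adjoint A (T i) (X i)"
    and x: "A_norm A x = 1"
  shows "(cmod (cinner (A (\<Sum>i\<in>I. T i x)) x)) ^ (2 * n)
    \<le> real (card I) ^ (2 * n - 1) / 2
       * Re (cinner (A (\<Sum>i\<in>I. ((X i \<circ> T i) ^^ n) x + ((T i \<circ> X i) ^^ n) x)) x)"
proof -
  note A' = positive_op_bounded[OF A]
  define c where "c i = cmod (cinner (A (T i x)) x)" for i
  have "(cmod (cinner (A (\<Sum>i\<in>I. T i x)) x)) ^ (2 * n) \<le> (\<Sum>i\<in>I. c i) ^ (2 * n)"
    unfolding c_def bounded_op_sum[OF A'] cinner_sum_left by (intro power_mono norm_sum) simp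
  also have "\<dots> \<le> real (card I) ^ (2 * n - 1) * (\<Sum>i\<in>I. c i ^ (2 * n))"
    using assms(2-4) by (intro sum_power_le_card_power) (simp_all add: c_def)
  also have "\<dots> \<le> real (card I) ^ (2 * n - 1)
      * (\<Sum>i\<in>I. 1/2 * Re (cinner (A (((X i \<circ> T i) ^^ n) x + ((T i \<circ> X i) ^^ n) x)) x))"
    using cmod_A_inner_power_le[OF A _ _ _ x] ops unfolding c_def
    by (intro mult_left_mono sum_mono) simp_all
  also have "\<dots> = real (card I) ^ (2 * n - 1) / 2
      * Re (cinner (A (\<Sum>i\<in>I. ((X i \<circ> T i) ^^ n) x + ((T i \<circ> X i) ^^ n) x)) x)"
    by (simp add: bounded_op_sum[OF A'] cinner_sum_left flip: sum_divide_distrib)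
  finally show ?thesis .
qed

lemma cSup_power_le:
  fixes N :: "real set"
  assumes "N \<noteq> {}" and "\<And>e. e \<in> N \<Longrightarrow> 0 \<le> e \<and> e ^ m \<le> R" and "0 < m"
  shows "Sup N ^ m \<le> R"
proof -
  obtain e0 where "e0 \<in> N"
    using assms(1) by blast
  then have "0 \<le> R"
    using assms(2) by (meson order_trans zero_le_power)
  have le_root: "e \<le> root m R" if "e \<in> N" for e
  proof -
    have "e = root m (e ^ m)"
      using assms(2)[OF that] \<open>0 < m\<close> by (simp add: real_root_power_cancel)
    also have "\<dots> \<le> root m R"
      using assms(2)[OF that] \<open>0 < m\<close> by (simp add: real_root_le_mono)
    finally show ?thesis .
  qed
  have "bdd_above N"
    using le_root by (rule bdd_aboveI)
  have "0 \<le> Sup N"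
    using assms(2)[OF \<open>e0 \<in> N\<close>] cSup_upper[OF \<open>e0 \<in> N\<close> \<open>bdd_above N\<close>] by linarith
  then have "Sup N ^ m \<le> root m R ^ m"
    using cSup_least[OF assms(1) le_root] by (simp add: power_mono)
  then show ?thesis
    using \<open>0 < m\<close> \<open>0 \<le> R\<close> by (simp add: real_root_pow_pos2)
qed

lemma A_numrad_power_le:
  assumes "\<exists>x. A_norm A x = 1" and "\<And>x. A_norm A x = 1 \<Longrightarrow> cmod (A_inner A (T x) x) ^ m \<le> R"
    and "0 < m"
  shows "A_numrad A T ^ m \<le> R"
  unfolding A_numrad_def using assms by (intro cSup_power_le) auto

lemma exists_A_unit:
  assumes A: "positive_op A" and "A \<noteq> (\<lambda>x. 0)"
  shows "\<exists>x. A_norm A x = 1"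
proof -
  obtain z where "A z \<noteq> 0"
    using assms(2) by blast
  define a where "a = Re (cinner (A z) z)"
  have "(cmod (cinner (A z) (A z)))\<^sup>2 \<le> a * Re (cinner (A (A z)) (A z))"
    unfolding a_def by (rule hermitian_form_Cauchy_Schwarz[OF hermitian_form_A[OF A]])
  moreover have "0 < cmod (cinner (A z) (A z))"
    using \<open>A z \<noteq> 0\<close> by (simp add: cinner_eq_zero_iff)
  ultimately have "0 < a"
    using positive_op_nonneg[OF A, of z] unfolding a_def by (smt (verit) mult_eq_0_iff zero_less_power)
  have "Re (cinner (A (scaleR (1 / sqrt a) z)) (scaleR (1 / sqrt a) z)) = 1"
    using \<open>0 < a\<close>
    by (simp add: a_def bounded_op_scaleR[OF positive_op_bounded[OF A]] cinner_scaleR_left cinner_scaleR_right)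
  then show ?thesis
    unfolding A_norm_def by (metis real_sqrt_one)
qed

lemma A_numrad_sum_power_le:
  assumes A: "positive_op A" "A \<noteq> (\<lambda>x. 0)" and "finite I" "I \<noteq> {}" "0 < n"
    and ops: "\<And>i. i \<in> I \<Longrightarrow> bounded_op (T i) \<and> bounded_op (X i) \<and> A_adjoint A (T i) (X i)"
  shows "A_numrad A (\<lambda>x. \<Sum>i\<in>I. T i x) ^ (2 * n)
    \<le> real (card I) ^ (2 * n - 1) / 2
       * A_opnorm A (\<lambda>x. \<Sum>i\<in>I. ((X i \<circ> T i) ^^ n) x + ((T i \<circ> X i) ^^ n) x)"
    (is "_ \<le> ?c * A_opnorm A ?Q")
proof (rule A_numrad_power_le)
  have Q: "bounded_op ?Q"
    using ops by (intro bounded_op_sum_fun bounded_op_plus bounded_op_funpow bounded_op_comp) auto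
  have Q_adjoint: "A_adjoint A ?Q ?Q"
    using ops A_adjoint_sym[OF A(1)]
    by (intro A_adjoint_sum A_adjoint_add A_adjoint_funpow A_adjoint_comp positive_op_bounded[OF A(1)]) auto
  show "cmod (A_inner A (\<Sum>i\<in>I. T i x) x) ^ (2 * n) \<le> ?c * A_opnorm A ?Q"
    if "A_norm A x = 1" for x
  proof -
    have "cmod (A_inner A (\<Sum>i\<in>I. T i x) x) ^ (2 * n) \<le> ?c * Re (cinner (A (?Q x)) x)"
      unfolding A_inner_def by (rule cmod_A_inner_sum_power_le[OF A(1) assms(3-5) ops that])
    also have "\<dots> \<le> ?c * A_opnorm A ?Q"
      using Re_A_inner_le_A_opnorm[OF A(1) Q Q_adjoint that] by (simp add: mult_left_mono)
    finally show ?thesis .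
  qed
qed (use exists_A_unit[OF A] \<open>0 < n\<close> in auto)

theorem theorem3p12:
  fixes A :: "'a::chilbert_space \<Rightarrow> 'a"
    and S :: "nat \<Rightarrow> 'a \<Rightarrow> 'a"
    and k n :: nat
  assumes "positive_op A"
    and "A \<noteq> (\<lambda>x. 0)"
    and "k \<ge> 1"
    and "\<forall>i\<in>{1..k}. in_BA A (S i)"
    and "n \<ge> 1"
  shows "A_numrad A (\<lambda>x. \<Sum>i=1..k. S i x) ^ (2 * n)
     \<le> real k ^ (2 * n - 1) / 2 *
        A_opnorm A (\<lambda>x. \<Sum>i=1..k. ((sharpA A (S i) \<circ> S i) ^^ n) x
                                   + ((S i \<circ> sharpA A (S i)) ^^ n) x)"
proof -
  have "bounded_op (S i) \<and> bounded_op (sharpA A (S i)) \<and> A_adjoint A (S i) (sharpA A (S i))"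
    if "i \<in> {1..k}" for i
    using assms(4) that sharpA_reduced_solution(1)[OF assms(1)] A_adjoint_sharpA[OF assms(1)]
    unfolding in_BA_def by blast
  then show ?thesis
    using A_numrad_sum_power_le[OF assms(1,2), of "{1..k}" n S "\<lambda>i. sharpA A (S i)"] assms(3,5)
    by simp
qed

end
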